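(* Let $q:\mathsf D\to\mathbb R$ have sensitivity $\Delta q\in(0,\infty)$, and let $\Lambda$ be a random variable with support in $(0,\infty)$, $\mathbb E[\Lambda]<\infty$, MGF $M_\Lambda$, and $M_\Lambda(\Delta q)<\infty$. Let $\epsilon_R=\ln[\mathbb E(\Lambda)/M'_\Lambda(-\Delta q)]$ be the privacy level of the Randomized DP Laplace mechanism with reciprocal scale $\Lambda$. If $\epsilon_R\ge \ln \mathbb E\big[e^{\Delta q\,\Lambda}\big]=\ln M_\Lambda(\Delta q)$, then for every $\gamma>0$ the usefulness of this mechanism is at most that of the baseline Laplace mechanism with the same privacy level, i.e. $$\mathbb P(|\mathcal M_q(d)-q(d)|\le\gamma)\le 1-e^{-\epsilon_R\gamma/\Delta q}.$$ Equivalently, a necessary condition for the Randomized DP Laplace mechanism to have strictly larger usefulness than the $\epsilon_R$-DP baseline Laplace mechanism for some $\gamma>0$ is $$e^{\epsilon_R}=\frac{\mathbb E(\Lambda)}{M'_\Lambda(-\Delta q)}<M_\Lambda(\Delta q).$$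
   Context: Databases form a set $\mathsf D$ with a symmetric adjacency relation; the sensitivity of $q$ is $\Delta q=\sup\{|q(d)-q(d')|:d,d'\text{ adjacent}\}$. The baseline $\epsilon$-DP Laplace mechanism outputs $q(d)+Z$ with $Z$ Laplace of mean $0$ and scale $\Delta q/\epsilon$, so its usefulness at level $\gamma$ is $\mathbb P(|Z|\le\gamma)=1-e^{-\epsilon\gamma/\Delta q}$. The Randomized DP Laplace mechanism with reciprocal-scale distribution $\Lambda$ (a random variable with values in $(0,\infty)$, playing the role of $1/b$ for the Laplace scale $b$) is defined by $\mathcal M_q(d)=q(d)+W$, where conditionally on $\Lambda=\lambda$ the noise $W$ is Laplace with mean $0$ and scale $1/\lambda$, i.e. has density $\frac{\lambda}{2}e^{-\lambda|w|}$; the pair $(\Lambda,W)$ is drawn independently of $d$. $M_\Lambda(t)=\mathbb E[e^{t\Lambda}]$ and $M'_\Lambda(t)=\mathbb E[\Lambda e^{t\Lambda}]$. *)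

theory Defs
  imports "HOL-Probability.Probability"
begin

definition sensitivity :: "('d \<Rightarrow> 'd \<Rightarrow> bool) \<Rightarrow> ('d \<Rightarrow> real) \<Rightarrow> real" where
  "sensitivity adj q = Sup {\<bar>q d - q d'\<bar> | d d'. adj d d'}"

definition mgf :: "real measure \<Rightarrow> real \<Rightarrow> real" where
  "mgf L t = (\<integral>x. exp (t * x) \<partial>L)"

definition mgf' :: "real measure \<Rightarrow> real \<Rightarrow> real" where
  "mgf' L t = (\<integral>x. x * exp (t * x) \<partial>L)"

definition laplace_density :: "real \<Rightarrow> real \<Rightarrow> real" where
  "laplace_density l w = l / 2 * exp (- l * \<bar>w\<bar>)"

definition rdp_noise :: "real measure \<Rightarrow> real measure" where
  "rdp_noise L = L \<bind> (\<lambda>l. density lborel (\<lambda>w. ennreal (laplace_density l w)))"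

definition rdp_laplace_mech :: "real measure \<Rightarrow> ('d \<Rightarrow> real) \<Rightarrow> 'd \<Rightarrow> real measure" where
  "rdp_laplace_mech L q d = distr (rdp_noise L) borel (\<lambda>w. q d + w)"

definition eps_R :: "real measure \<Rightarrow> real \<Rightarrow> real" where
  "eps_R L \<Delta> = ln ((\<integral>x. x \<partial>L) / mgf' L (- \<Delta>))"

end

theory Submission imports Defs begin

text \<open>Conditionally on \<open>\<Lambda> = \<lambda>\<close> the noise stays in \<open>[-\<gamma>, \<gamma>]\<close> with probability
  \<open>1 - e^{-\<gamma>\<lambda>}\<close>, so the usefulness of the randomized mechanism is \<open>1 - E[e^{-\<gamma>\<Lambda>}]\<close>.
  By Jensen, \<open>E[e^{-\<gamma>\<Lambda>}] \<ge> e^{-\<gamma> E \<Lambda>}\<close> and \<open>e^{\<Delta> E \<Lambda>} \<le> M_\<Lambda>(\<Delta>) \<le> e^{\<epsilon>_R}\<close>,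
  i.e. \<open>E \<Lambda> \<le> \<epsilon>_R / \<Delta>\<close>; together these give the bound \<open>1 - e^{-\<epsilon>_R \<gamma> / \<Delta>}\<close>.\<close>

abbreviation laplace_measure :: "real \<Rightarrow> real measure" where
  "laplace_measure l \<equiv> density lborel (\<lambda>w. ennreal (laplace_density l w))"

lemma laplace_density_measurable_prod [measurable]:
  "(\<lambda>(l, w). laplace_density l w) \<in> borel_measurable (borel \<Otimes>\<^sub>M borel)"
  unfolding laplace_density_def by measurable

lemma laplace_density_measurable [measurable]: "laplace_density l \<in> borel_measurable borel"
  unfolding laplace_density_def by measurable

lemma laplace_density_has_integral_interval:
  assumes l: "l > 0" and t: "t \<ge> 0"
  shows "(laplace_density l has_integral (1 - exp (- l * t))) {-t..t}"
proof -
  have "((\<lambda>w. l / 2 * exp (- l * w)) has_integral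
          (- 1 / 2 * exp (- l * t)) - (- 1 / 2 * exp (- l * 0))) {0..t}"
    by (rule fundamental_theorem_of_calculus[OF t])
       (auto intro!: derivative_eq_intros
             simp: has_real_derivative_iff_has_vector_derivative[symmetric])
  then have "((\<lambda>w. l / 2 * exp (- l * w)) has_integral (1 / 2 - 1 / 2 * exp (- l * t))) {0..t}"
    by simp
  then have right: "(laplace_density l has_integral (1 / 2 - 1 / 2 * exp (- l * t))) {0..t}"
    by (rule has_integral_eq[rotated]) (auto simp: laplace_density_def)
  have "((\<lambda>w. l / 2 * exp (l * w)) has_integral
          (1 / 2 * exp (l * 0)) - (1 / 2 * exp (l * (- t)))) {-t..0}"
    using t by (intro fundamental_theorem_of_calculus)
       (auto intro!: derivative_eq_intros
             simp: has_real_derivative_iff_has_vector_derivative[symmetric])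
  then have "((\<lambda>w. l / 2 * exp (l * w)) has_integral (1 / 2 - 1 / 2 * exp (- l * t))) {-t..0}"
    by simp
  then have left: "(laplace_density l has_integral (1 / 2 - 1 / 2 * exp (- l * t))) {-t..0}"
    by (rule has_integral_eq[rotated]) (auto simp: laplace_density_def)
  show ?thesis
    using has_integral_combine[OF _ _ left right] t by simp
qed

lemma emeasure_laplace_interval:
  assumes "l > 0" and "t \<ge> 0"
  shows "emeasure (laplace_measure l) {-t..t} = ennreal (1 - exp (- l * t))"
proof -
  have "emeasure (laplace_measure l) {-t..t}
      = (\<integral>\<^sup>+ w. ennreal (laplace_density l w) * indicator {-t..t} w \<partial>lborel)"
    by (rule emeasure_density) auto
  also have "\<dots> = ennreal (1 - exp (- l * t))"
    using assms
    by (intro nn_integral_has_integral_lebesgue' laplace_density_has_integral_interval)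
       (auto simp: laplace_density_def)
  finally show ?thesis .
qed

text \<open>The mixing kernel must be a subprobability for every \<open>l\<close>, including the meaningless
  scales \<open>l \<le> 0\<close>, where the density is nonpositive and hence vanishes in \<open>ennreal\<close>.\<close>

lemma emeasure_laplace_nonpos_scale:
  assumes "l \<le> 0" and "A \<in> sets borel"
  shows "emeasure (laplace_measure l) A = 0"
proof -
  have "laplace_density l w \<le> 0" for w
    using assms(1) by (simp add: laplace_density_def mult_nonpos_nonneg)
  then have "(\<lambda>w. ennreal (laplace_density l w) * indicator A w) = (\<lambda>_. 0)"
    by (simp add: ennreal_neg)
  with assms(2) show ?thesis
    by (subst emeasure_density) auto
qed

lemma subprob_space_laplace_measure: "subprob_space (laplace_measure l)"
proof (rule subprob_spaceI)
  show "emeasure (laplace_measure l) (space (laplace_measure l)) \<le> 1"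
  proof (cases "l > 0")
    case True
    have "x \<in> (\<Union>n. {- real n..real n})" for x :: real
    proof -
      obtain n where "\<bar>x\<bar> \<le> real n"
        using real_arch_simple by blast
      then show ?thesis
        by (auto simp: abs_le_iff intro!: exI[of _ n])
    qed
    then have UNIV_eq: "(UNIV :: real set) = (\<Union>n. {- real n..real n})"
      by blast
    have "emeasure (laplace_measure l) (\<Union>n. {- real n..real n})
        = (SUP n. emeasure (laplace_measure l) {- real n..real n})"
      by (rule SUP_emeasure_incseq[symmetric]) (auto simp: incseq_def)
    also have "\<dots> \<le> 1"
      using True by (intro SUP_least) (simp add: emeasure_laplace_interval)
    finally show ?thesis
      by (simp flip: UNIV_eq)
  qed (simp add: emeasure_laplace_nonpos_scale)
qed simp

lemma measurable_laplace_measure: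
  assumes "sets L = sets borel"
  shows "laplace_measure \<in> measurable L (subprob_algebra lborel)"
proof (rule measurable_subprob_algebra)
  fix A :: "real set" assume A: "A \<in> sets lborel"
  have "(\<lambda>l. emeasure (laplace_measure l) A)
      = (\<lambda>l. \<integral>\<^sup>+ w. ennreal (laplace_density l w) * indicator A w \<partial>lborel)"
    using A by (intro ext emeasure_density) auto
  also have "\<dots> \<in> borel_measurable borel"
    using A by measurable
  finally show "(\<lambda>l. emeasure (laplace_measure l) A) \<in> borel_measurable L"
    by (subst measurable_cong_sets[OF assms refl])
qed (simp_all add: subprob_space_laplace_measure)

lemma sets_rdp_noise:
  assumes "prob_space L" and "sets L = sets borel"
  shows "sets (rdp_noise L) = sets borel"
  using assms measurable_laplace_measure[OF assms(2)]
  by (auto simp: rdp_noise_def prob_space.not_empty intro!: sets_bind)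

lemma integrable_exp_neg_mult:
  fixes L :: "real measure"
  assumes "prob_space L" and "sets L = sets borel" and "AE l in L. 0 < l" and "t \<ge> 0"
  shows "integrable L (\<lambda>l. exp (- t * l))"
proof (rule finite_measure.integrable_const_bound[where B = 1])
  show "finite_measure L"
    using assms(1) by (rule prob_space.finite_measure)
  show "AE l in L. norm (exp (- t * l)) \<le> 1"
    using assms(3) by eventually_elim (use assms(4) in simp)
qed (simp add: measurable_cong_sets[OF assms(2) refl])

lemma measure_rdp_noise_interval:
  assumes L: "prob_space L" "sets L = sets borel" and pos: "AE l in L. 0 < l"
    and t: "t \<ge> 0"
  shows "measure (rdp_noise L) {-t..t} = 1 - (\<integral>l. exp (- t * l) \<partial>L)"
proof -
  interpret prob_space L by (rule L(1))
  have int_exp: "integrable L (\<lambda>l. exp (- t * l))"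
    by (rule integrable_exp_neg_mult[OF L pos t])
  have nonneg: "AE l in L. 0 \<le> 1 - exp (- t * l)"
    using pos by eventually_elim (use t in simp)
  have "emeasure (rdp_noise L) {-t..t} = (\<integral>\<^sup>+ l. emeasure (laplace_measure l) {-t..t} \<partial>L)"
    unfolding rdp_noise_def
    by (rule emeasure_bind[OF not_empty measurable_laplace_measure[OF L(2)]]) simp
  also have "\<dots> = (\<integral>\<^sup>+ l. ennreal (1 - exp (- t * l)) \<partial>L)"
    using pos t by (intro nn_integral_cong_AE) (auto simp: emeasure_laplace_interval mult.commute)
  also have "\<dots> = ennreal (\<integral>l. 1 - exp (- t * l) \<partial>L)"
    using int_exp nonneg by (intro nn_integral_eq_integral) auto
  finally have "measure (rdp_noise L) {-t..t} = (\<integral>l. 1 - exp (- t * l) \<partial>L)"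
    using integral_nonneg_AE[OF nonneg] by (simp add: measure_def)
  also have "\<dots> = 1 - (\<integral>l. exp (- t * l) \<partial>L)"
    using int_exp by (simp add: prob_space)
  finally show ?thesis .
qed

lemma measure_rdp_laplace_mech_ball:
  assumes "prob_space L" and "sets L = sets borel"
  shows "measure (rdp_laplace_mech L q d) {y. \<bar>y - q d\<bar> \<le> \<gamma>} = measure (rdp_noise L) {-\<gamma>..\<gamma>}"
proof -
  have sets_N: "sets (rdp_noise L) = sets borel"
    by (rule sets_rdp_noise[OF assms])
  have "measure (rdp_laplace_mech L q d) {y. \<bar>y - q d\<bar> \<le> \<gamma>}
      = measure (rdp_noise L) ((\<lambda>w. q d + w) -` {y. \<bar>y - q d\<bar> \<le> \<gamma>} \<inter> space (rdp_noise L))"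
    unfolding rdp_laplace_mech_def
    by (rule measure_distr) (auto simp: measurable_cong_sets[OF sets_N refl])
  also have "(\<lambda>w. q d + w) -` {y. \<bar>y - q d\<bar> \<le> \<gamma>} \<inter> space (rdp_noise L) = {-\<gamma>..\<gamma>}"
    using sets_eq_imp_space_eq[OF sets_N] by (auto simp: abs_le_iff)
  finally show ?thesis .
qed

lemma exp_mean_le_integral_exp:
  fixes M :: "real measure"
  assumes "prob_space M" and "integrable M (\<lambda>x. x)" and "integrable M (\<lambda>x. exp (c * x))"
  shows "exp (c * (\<integral>x. x \<partial>M)) \<le> (\<integral>x. exp (c * x) \<partial>M)"
proof -
  have "exp (\<integral>x. c * x \<partial>M) \<le> (\<integral>x. exp (c * x) \<partial>M)"
    using assms exp_convex by (intro prob_space.jensens_inequality[where I = UNIV]) auto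
  then show ?thesis
    by simp
qed

lemma mean_le_eps_R_div:
  assumes "prob_space L" and "integrable L (\<lambda>x. x)" and "integrable L (\<lambda>x. exp (s * x))"
    and "s > 0" and "eps_R L s \<ge> ln (mgf L s)"
  shows "(\<integral>x. x \<partial>L) \<le> eps_R L s / s"
proof -
  have "exp (s * (\<integral>x. x \<partial>L)) \<le> mgf L s"
    unfolding mgf_def using assms by (intro exp_mean_le_integral_exp)
  then have "s * (\<integral>x. x \<partial>L) \<le> ln (mgf L s)"
    by (subst ln_ge_iff) (auto intro: less_le_trans[OF exp_gt_zero])
  with assms show ?thesis
    by (simp add: field_simps)
qed

theorem mainTheorem6:
  fixes adj :: "'d \<Rightarrow> 'd \<Rightarrow> bool" and q :: "'d \<Rightarrow> real" and L :: "real measure"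
    and \<gamma> :: real and d :: 'd
  assumes adj_sym: "symp adj"
    and adj_ne: "\<exists>d d'. adj d d'"
    and sens_bdd: "bdd_above {\<bar>q d - q d'\<bar> | d d'. adj d d'}"
    and sens_pos: "sensitivity adj q > 0"
    and L_prob: "prob_space L"
    and L_sets: "sets L = sets borel"
    and L_pos: "AE x in L. 0 < x"
    and L_mean: "integrable L (\<lambda>x. x)"
    and L_mgf: "integrable L (\<lambda>x. exp (sensitivity adj q * x))"
    and cond: "eps_R L (sensitivity adj q) \<ge> ln (mgf L (sensitivity adj q))"
    and \<gamma>_pos: "\<gamma> > 0"
  shows "measure (rdp_laplace_mech L q d) {y. \<bar>y - q d\<bar> \<le> \<gamma>}
           \<le> 1 - exp (- eps_R L (sensitivity adj q) * \<gamma> / sensitivity adj q)"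
proof -
  \<comment> \<open>The hypotheses on \<open>adj\<close> only make the sensitivity meaningful; its positivity is all we use.\<close>
  define s where "s = sensitivity adj q"
  have "\<gamma> * (\<integral>x. x \<partial>L) \<le> \<gamma> * (eps_R L s / s)"
    using mean_le_eps_R_div[OF L_prob L_mean] L_mgf sens_pos cond \<gamma>_pos
    by (intro mult_left_mono) (auto simp: s_def)
  then have "exp (- eps_R L s * \<gamma> / s) \<le> exp (- \<gamma> * (\<integral>x. x \<partial>L))"
    by (simp add: mult.commute)
  also have "\<dots> \<le> (\<integral>x. exp (- \<gamma> * x) \<partial>L)"
    using L_prob L_sets L_pos \<gamma>_pos
    by (intro exp_mean_le_integral_exp[OF L_prob L_mean] integrable_exp_neg_mult) auto
  finally have "exp (- eps_R L s * \<gamma> / s) \<le> (\<integral>x. exp (- \<gamma> * x) \<partial>L)" .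
  moreover have "measure (rdp_laplace_mech L q d) {y. \<bar>y - q d\<bar> \<le> \<gamma>} = 1 - (\<integral>x. exp (- \<gamma> * x) \<partial>L)"
    using measure_rdp_laplace_mech_ball[OF L_prob L_sets]
      measure_rdp_noise_interval[OF L_prob L_sets L_pos less_imp_le[OF \<gamma>_pos]]
    by (rule trans)
  ultimately show ?thesis
    by (simp add: s_def)
qed

end
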